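(* Let $(k,|\cdot|)$ be an algebraically closed complete metrized field, $\mathbb{D}=\{t\in k:|t|<1\}$, $d\ge2$, and let $P_t(z)=\alpha_0(t)z^d+\cdots+\alpha_d(t)$ with $\alpha_i\in\mathcal{O}(\mathbb{D})[t^{-1}]$ and $\alpha_0(t)\ne0$ for $t\ne0$. Let $C>0$ be a constant such that $$\left|\frac1d\log\max\{1,|P_t(z)|\}-\log\max\{1,|z|\}\right|\le C\log|t|^{-1}\quad\text{for all }0<|t|\le\tfrac12,\ z\in k.$$ Let $a\in\mathcal{O}(\mathbb{D})[t^{-1}]$ be such that $u_m(t):=P_t^m(a(t))$ is analytic on $\mathbb{D}$ for all $m\ge0$, and set $g_m(t):=d^{-m}\log\max\{1,|u_m(t)|\}$. Let $l\ge Cd$ be an integer and let $Q_1,\dots,Q_N\in k[t]$ be polynomials such that for every $n\ge0$ there is $i_n\in\{1,\dots,N\}$ with $(u_n(t)-Q_{i_n}(t))/t^l$ analytic on $\mathbb{D}$. Put $A:=\max_{1\le j\le N}\left\{\sup_{|t|<1}|Q_j(t)|+2\right\}$. Let $n_0\ge1$ be an integer and $0<r_0\le\frac12$ with $\sup_{|t|<r_0}|u_{n_0}(t)|\le\log A$, and set $r_j:=r_0^{2^j}$ for $j\ge0$. Then for all $j\ge0$, $$\sup_{|t|<r_j}g_{n_0+j}(t)\le\frac{C_1}{d^{n_0}},\qquad\text{where }C_1=\frac{d}{d-1}\log(3A).$$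
   Context: $\mathcal{O}(\mathbb{D})$ is the ring of analytic functions on $\mathbb{D}$; $\mathcal{O}(\mathbb{D})[t^{-1}]$ consists of meromorphic functions on $\mathbb{D}$ with poles only at $0$. *)

theory Defs
  imports Complex_Main "HOL-Computational_Algebra.Polynomial"
begin

definition is_abs_val :: "('k::field \<Rightarrow> real) \<Rightarrow> bool" where
  "is_abs_val av \<longleftrightarrow>
     (\<forall>x. av x \<ge> 0) \<and> (\<forall>x. av x = 0 \<longleftrightarrow> x = 0) \<and>
     (\<forall>x y. av (x * y) = av x * av y) \<and> (\<forall>x y. av (x + y) \<le> av x + av y)"

definition av_complete :: "('k::field \<Rightarrow> real) \<Rightarrow> bool" where
  "av_complete av \<longleftrightarrow>
     (\<forall>X :: nat \<Rightarrow> 'k.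
        (\<forall>e>0. \<exists>M. \<forall>m\<ge>M. \<forall>n\<ge>M. av (X m - X n) < e) \<longrightarrow>
        (\<exists>L. \<forall>e>0. \<exists>M. \<forall>n\<ge>M. av (X n - L) < e))"

definition alg_closed :: "'k::field itself \<Rightarrow> bool" where
  "alg_closed _ \<longleftrightarrow> (\<forall>p :: 'k poly. degree p \<ge> 1 \<longrightarrow> (\<exists>x. poly p x = 0))"

definition av_sums :: "('k::field \<Rightarrow> real) \<Rightarrow> (nat \<Rightarrow> 'k) \<Rightarrow> 'k \<Rightarrow> bool" where
  "av_sums av f s \<longleftrightarrow> (\<lambda>n. av (s - (\<Sum>i<n. f i))) \<longlonglongrightarrow> 0"

definition analytic_D :: "('k::field \<Rightarrow> real) \<Rightarrow> ('k \<Rightarrow> 'k) \<Rightarrow> bool" where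
  "analytic_D av f \<longleftrightarrow>
     (\<exists>c :: nat \<Rightarrow> 'k. \<forall>t. av t < 1 \<longrightarrow> av_sums av (\<lambda>n. c n * t ^ n) (f t))"

text \<open>Elements of O(D)[t^-1]: meromorphic on D with poles only at 0
  (considered as functions on the punctured disc).\<close>
definition mero_D :: "('k::field \<Rightarrow> real) \<Rightarrow> ('k \<Rightarrow> 'k) \<Rightarrow> bool" where
  "mero_D av f \<longleftrightarrow>
     (\<exists>h (N::nat). analytic_D av h \<and> (\<forall>t. 0 < av t \<and> av t < 1 \<longrightarrow> f t = h t / t ^ N))"

end

theory Submission
  imports Defs "HOL-Computational_Algebra.Primes"
begin

(* The argument rests on a maximum modulus principle on the disc: a function given by a power
   series is bounded at t by its supremum on any circle of radius at least av t.  For a polynomial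
   of degree below m, averaging over the m-th roots of unity bounds each coefficient by the
   supremum on the circle, at a cost 1 / av m; taking m a power of a prime q with av q >= 1/2
   (q = 2 or 3) and applying this to p ^ N, the loss is polynomial in N and disappears after
   taking N-th roots.  Power series are uniform limits of their partial sums.

   Let M j bound ln (max 1 (av (u (n0 + j) w))) for
   av w < r j.  On the circle of radius sqrt (av t) the growth estimate for P bounds
   av (u (n0 + j + 1) w) by exp (d * M j) / av w ^ (C * d); dividing
   u (n0 + j + 1) - Q i by t ^ l and applying the maximum principle on that circle, l >= C * d
   gives av (u (n0 + j + 1) t) <= 2 * (A - 2) + exp (d * M j) <= 3 * A * exp (d * M j). *)

lemma pow_eq_one_gcd:
  fixes w :: "'k::field"
  assumes "w ^ a = 1" "w ^ b = 1"
  shows "w ^ gcd a b = 1"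
proof (cases "a = 0")
  case True
  then show ?thesis using assms by simp
next
  case False
  then obtain x y where xy: "a * x = b * y + gcd a b" using bezout_nat by blast
  have "w ^ (a * x) = w ^ (b * y) * w ^ gcd a b" by (simp add: xy power_add)
  then show ?thesis using assms by (simp add: power_mult)
qed

lemma alg_closed_root:
  fixes p :: "'k::field poly"
  assumes "alg_closed TYPE('k)" "degree p \<ge> 1"
  shows "\<exists>x. poly p x = 0"
  using assms unfolding alg_closed_def by blast

lemma alg_closed_sqrt:
  assumes "alg_closed TYPE('k::field)"
  shows "\<exists>y::'k. y ^ 2 = x"
proof -
  obtain y where "poly [:-x, 0, 1:] y = 0" using alg_closed_root[OF assms, of "[:-x, 0, 1:]"] by auto
  then show ?thesis by (auto simp: algebra_simps power2_eq_square)
qed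

lemma alg_closed_nontrivial_root_of_unity:
  assumes alg: "alg_closed TYPE('k::field)" and q: "q \<ge> 2" and q_nz: "(of_nat q :: 'k) \<noteq> 0"
  shows "\<exists>\<eta>::'k. \<eta> ^ q = 1 \<and> \<eta> \<noteq> 1"
proof -
  define p :: "'k poly" where "p = (\<Sum>i<q. monom 1 i)"
  have "coeff p (q - 1) = 1" using q unfolding p_def coeff_sum by simp
  then have "degree p \<ge> 1" using q le_degree[of p "q - 1"] by simp
  then obtain e where "poly p e = 0" using alg_closed_root[OF alg] by blast
  then have sum_e: "(\<Sum>i<q. e ^ i) = 0" unfolding p_def poly_sum poly_monom by simp
  then have "e \<noteq> 1" using q_nz by auto
  moreover have "e ^ q = 1" using sum_gp_basic[of e "q - 1"] sum_e q
    by (simp add: lessThan_Suc_atMost[symmetric])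
  ultimately show ?thesis by blast
qed

text \<open>A primitive root of unity of order q ^ (e + 1) is a q ^ e-th root of a nontrivial q-th root
  of unity, so no separability argument is needed for prime power orders.\<close>

lemma alg_closed_primitive_root_prime_power:
  assumes alg: "alg_closed TYPE('k::field)" and q: "prime q" and q_nz: "(of_nat q :: 'k) \<noteq> 0"
  shows "\<exists>w::'k. w ^ (q ^ e) = 1 \<and> (\<forall>j. w ^ j = 1 \<longrightarrow> q ^ e dvd j)"
proof (cases e)
  case 0
  then show ?thesis by (intro exI[of _ 1]) simp
next
  case (Suc e')
  obtain \<eta> :: 'k where \<eta>: "\<eta> ^ q = 1" "\<eta> \<noteq> 1"
    using alg_closed_nontrivial_root_of_unity[OF alg prime_ge_2_nat[OF q] q_nz] by blast
  define p :: "'k poly" where "p = monom 1 (q ^ e') - [:\<eta>:]"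
  have pos: "q ^ e' \<ge> 1" using prime_gt_0_nat[OF q] by simp
  have "coeff p (q ^ e') = 1"
    unfolding p_def using pos prime_gt_0_nat[OF q] by (simp add: coeff_diff coeff_pCons split: nat.split)
  then have "degree p \<ge> 1" using pos le_degree[of p "q ^ e'"] by simp
  then obtain w where "poly p w = 0" using alg_closed_root[OF alg] by blast
  then have w_root: "w ^ (q ^ e') = \<eta>" unfolding p_def by (simp add: poly_monom)
  have w_one: "w ^ (q ^ e) = 1"
    using Suc w_root \<eta> by (metis mult.commute power_Suc power_mult)
  have "q ^ e dvd j" if j: "w ^ j = 1" for j
  proof -
    have "gcd j (q ^ e) dvd q ^ e" by simp
    then obtain f where f: "f \<le> e" "gcd j (q ^ e) = q ^ f"
      using divides_primepow_nat[OF q] by blast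
    have w_f: "w ^ (q ^ f) = 1" using pow_eq_one_gcd[OF j w_one] f by simp
    show ?thesis
    proof (cases "f = e")
      case True
      then show ?thesis using f by (metis gcd_dvd1)
    next
      case False
      then have "q ^ f dvd q ^ e'" using f Suc by (simp add: le_imp_power_dvd)
      then have "w ^ (q ^ e') = 1" using w_f by (auto elim!: dvdE simp: power_mult)
      then show ?thesis using w_root \<eta> by simp
    qed
  qed
  then show ?thesis using w_one by blast
qed

lemma sum_powers_root_of_unity:
  fixes w :: "'k::field"
  assumes w: "w ^ m = 1" and ord: "\<forall>j. w ^ j = 1 \<longrightarrow> m dvd j"
  shows "(\<Sum>i<m. (w ^ k) ^ i) = (if m dvd k then of_nat m else 0)"
proof (cases "m dvd k")
  case True
  then have "w ^ k = 1" using w by (auto elim!: dvdE simp: power_mult)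
  then show ?thesis using True by simp
next
  case False
  then have "w ^ k \<noteq> 1" using ord by blast
  moreover have "(w ^ k) ^ m = 1" using w by (metis mult.commute power_mult power_one)
  ultimately show ?thesis using False by (simp add: sum_gp_strict)
qed

text \<open>Discrete Cauchy formula; the factor (w ^ i) ^ (m - k) is w ^ (- i * k).\<close>

lemma poly_coeff_root_of_unity_average:
  fixes w :: "'k::field" and p :: "'k poly"
  assumes w: "w ^ m = 1" and ord: "\<forall>j. w ^ j = 1 \<longrightarrow> m dvd j"
    and deg: "degree p < m" and k: "k < m"
  shows "(\<Sum>i<m. poly p (w ^ i * s) * (w ^ i) ^ (m - k)) = of_nat m * coeff p k * s ^ k"
proof -
  let ?D = "degree p"
  have dvd_iff: "m dvd (n + (m - k)) \<longleftrightarrow> n = k" if "n \<le> ?D" for n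
  proof
    assume "m dvd (n + (m - k))"
    moreover have "0 < n + (m - k)" "n + (m - k) < 2 * m" using that deg k by auto
    ultimately have "n + (m - k) = m" by (auto elim!: dvdE simp: less_2_cases_iff)
    then show "n = k" using k by simp
  qed (use k in simp)
  have "(\<Sum>i<m. poly p (w ^ i * s) * (w ^ i) ^ (m - k)) =
        (\<Sum>i<m. \<Sum>n\<le>?D. coeff p n * s ^ n * (w ^ (n + (m - k))) ^ i)"
    by (simp add: poly_altdef sum_distrib_left sum_distrib_right power_mult_distrib power_add
        power_mult[symmetric] mult_ac)
  also have "\<dots> = (\<Sum>n\<le>?D. coeff p n * s ^ n * (\<Sum>i<m. (w ^ (n + (m - k))) ^ i))"
    by (subst sum.swap) (simp add: sum_distrib_left)
  also have "\<dots> = (\<Sum>n\<le>?D. if n = k then coeff p n * s ^ n * of_nat m else 0)"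
    using sum_powers_root_of_unity[OF w ord] dvd_iff by (intro sum.cong) auto
  also have "\<dots> = of_nat m * coeff p k * s ^ k"
    by (cases "k \<le> ?D") (simp_all add: coeff_eq_0)
  finally show ?thesis .
qed

lemma cube_over_power_tendsto_zero:
  fixes \<rho> :: real
  assumes "\<rho> > 1"
  shows "(\<lambda>n. real n ^ 3 / \<rho> ^ n) \<longlonglongrightarrow> 0"
proof -
  define y where "y = root 3 (1 / \<rho>)"
  have y3: "y ^ 3 = 1 / \<rho>" unfolding y_def using assms by (simp add: real_root_pow_pos2)
  have "norm y < 1" using assms unfolding y_def by (simp add: real_root_lt_1_iff)
  then have "(\<lambda>n. (of_nat n * y ^ n) ^ 3) \<longlonglongrightarrow> 0 ^ 3"
    by (intro tendsto_power powser_times_n_limit_0)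
  moreover have "(of_nat n * y ^ n) ^ 3 = real n ^ 3 / \<rho> ^ n" for n
    by (simp add: power_mult_distrib power_mult[symmetric] mult.commute[of n 3] power_mult y3
        power_divide)
  ultimately show ?thesis by simp
qed

text \<open>The tensor power trick: a loss polynomial in N = q ^ j in the bound for T ^ N disappears.\<close>

lemma le_of_power_bound:
  fixes T B c :: real and q :: nat
  assumes q: "q \<ge> 2" and B: "B \<ge> 0"
    and bound: "\<And>j. T ^ (q ^ j) \<le> c * real (q ^ j) ^ 3 * B ^ (q ^ j)"
  shows "T \<le> B"
proof (rule ccontr)
  assume "\<not> T \<le> B"
  then have TB: "B < T" by simp
  moreover have "T \<le> c * B" using bound[of 0] by simp
  ultimately have "0 < c * B" using B by linarith
  then have B_pos: "B > 0" and c_pos: "c > 0" using B by (auto simp: zero_less_mult_iff)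
  define \<rho> where "\<rho> = T / B"
  have \<rho>: "\<rho> > 1" unfolding \<rho>_def using TB B_pos by simp
  have "eventually (\<lambda>n. real n ^ 3 / \<rho> ^ n < 1 / c) sequentially"
    using cube_over_power_tendsto_zero[OF \<rho>] c_pos by (intro order_tendstoD) auto
  then obtain M where M: "\<And>n. n \<ge> M \<Longrightarrow> real n ^ 3 / \<rho> ^ n < 1 / c"
    unfolding eventually_sequentially by blast
  have "M < 2 ^ M" by (rule less_exp)
  also have "(2::nat) ^ M \<le> q ^ M" using q by (intro power_mono) auto
  finally have "M \<le> q ^ M" by simp
  then have small: "real (q ^ M) ^ 3 / \<rho> ^ (q ^ M) < 1 / c" using M by blast
  have "\<rho> ^ (q ^ M) * B ^ (q ^ M) \<le> c * real (q ^ M) ^ 3 * B ^ (q ^ M)"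
    using bound[of M] B_pos unfolding \<rho>_def by (simp add: power_divide)
  then have "\<rho> ^ (q ^ M) \<le> c * real (q ^ M) ^ 3" using B_pos by simp
  then show False using small c_pos \<rho> by (simp add: field_simps)
qed

lemma le_exp_powr_of_ln_max_growth:
  fixes x y B C r :: real and d :: nat
  assumes "0 < d" "0 < r"
    and "ln (max 1 x) / d - ln (max 1 y) \<le> C * ln (1 / r)" and "ln (max 1 y) \<le> B"
  shows "x \<le> exp (d * B) * r powr (- (C * d))"
proof -
  have "ln (max 1 x) \<le> d * ln (max 1 y) + C * d * ln (1 / r)"
    using assms by (simp add: field_simps)
  then have "ln (max 1 x) \<le> d * B + C * d * ln (1 / r)"
    using mult_left_mono[OF assms(4), of "real d"] by linarith
  then have "max 1 x \<le> exp (d * B + C * d * ln (1 / r))"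
    by (metis exp_le_cancel_iff exp_ln max.strict_coboundedI1 zero_less_one)
  also have "\<dots> = exp (d * B) * r powr (- (C * d))"
    using assms by (simp add: exp_add[symmetric] powr_def ln_div)
  finally show ?thesis by simp
qed

locale abs_value =
  fixes av :: "'k::field \<Rightarrow> real"
  assumes is_abs_val: "is_abs_val av"
begin

lemma av_nonneg [simp]: "av x \<ge> 0"
  using is_abs_val unfolding is_abs_val_def by blast

lemma av_eq_0_iff [simp]: "av x = 0 \<longleftrightarrow> x = 0"
  using is_abs_val unfolding is_abs_val_def by blast

lemma av_mult: "av (x * y) = av x * av y"
  using is_abs_val unfolding is_abs_val_def by blast

lemma av_triangle: "av (x + y) \<le> av x + av y"
  using is_abs_val unfolding is_abs_val_def by blast

lemma av_0 [simp]: "av 0 = 0"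
  by simp

lemma av_pos_iff: "av x > 0 \<longleftrightarrow> x \<noteq> 0"
  using av_nonneg[of x] av_eq_0_iff[of x] by linarith

lemma av_1 [simp]: "av 1 = 1"
  using av_mult[of 1 1] av_eq_0_iff[of 1] by (metis mult_cancel_left1 one_neq_zero)

lemma av_power: "av (x ^ n) = av x ^ n"
  by (induction n) (simp_all add: av_mult)

lemma av_minus: "av (- x) = av x"
proof -
  have "av (-1) * av (-1) = 1" using av_mult[of "-1" "-1"] by simp
  then have "av (-1) = 1" using av_nonneg[of "-1"] by (smt (verit) power2_eq_1_iff power2_eq_square)
  then show ?thesis using av_mult[of "-1" x] by simp
qed

lemma av_diff_le: "av (x - y) \<le> av x + av y"
  using av_triangle[of x "- y"] by (simp add: av_minus)

lemma av_sum: "av (sum f S) \<le> (\<Sum>i\<in>S. av (f i))"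
  by (induction S rule: infinite_finite_induct) (auto intro: order_trans[OF av_triangle])

lemma av_inverse: "av (inverse x) = inverse (av x)"
  using inverse_unique[of "av x" "av (inverse x)"] av_mult[of x "inverse x"]
  by (cases "x = 0") simp_all

lemma av_root_of_unity: "w ^ m = 1 \<Longrightarrow> m > 0 \<Longrightarrow> av w = 1"
  using av_power[of w m] power_eq_imp_eq_base[of "av w" m 1] by simp

lemma av_sqrt: "y ^ 2 = x \<Longrightarrow> av y = sqrt (av x)"
  using av_power[of y 2] by (metis av_nonneg real_sqrt_unique)

lemma exists_prime_av_ge_half: "\<exists>q. prime q \<and> av (of_nat q) \<ge> 1/2"
proof -
  have "1 \<le> av (of_nat 3) + av (of_nat 2)"
    using av_diff_le[of "of_nat 3" "of_nat 2"] by simp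
  then have "av (of_nat 3) \<ge> 1/2 \<or> av (of_nat 2) \<ge> 1/2" by linarith
  moreover have "prime (2::nat)" "prime (3::nat)" by simp_all
  ultimately show ?thesis by blast
qed

lemma coeff_le_circle_bound:
  fixes p :: "'k poly"
  assumes alg: "alg_closed TYPE('k)" and q: "prime q" and q_half: "av (of_nat q) \<ge> 1/2"
    and deg: "degree p < q ^ e" and bound: "\<And>x. av x = av s \<Longrightarrow> av (poly p x) \<le> B"
  shows "av (coeff p k) * av s ^ k \<le> (2 * real q) ^ e * B"
proof (cases "k \<le> degree p")
  case False
  have "B \<ge> 0" using bound[of s] av_nonneg[of "poly p s"] by linarith
  then show ?thesis using False by (simp add: coeff_eq_0)
next
  case True
  let ?m = "q ^ e"
  have k: "k < ?m" using True deg by simp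
  have "(of_nat q :: 'k) \<noteq> 0" using q_half by auto
  then obtain w :: 'k where w: "w ^ ?m = 1" and ord: "\<forall>j. w ^ j = 1 \<longrightarrow> ?m dvd j"
    using alg_closed_primitive_root_prime_power[OF alg q] by blast
  have av_w: "av w = 1" using av_root_of_unity[OF w] prime_gt_0_nat[OF q] by simp
  have "av (of_nat ?m :: 'k) = av (of_nat q) ^ e" by (simp add: av_power[symmetric])
  then have av_m: "(1/2) ^ e \<le> av (of_nat ?m :: 'k)" using q_half by (simp add: power_mono)
  have "(1/2) ^ e * (av (coeff p k) * av s ^ k) \<le> av (of_nat ?m) * (av (coeff p k) * av s ^ k)"
    using av_m by (intro mult_right_mono) simp_all
  also have "\<dots> = av (\<Sum>i<?m. poly p (w ^ i * s) * (w ^ i) ^ (?m - k))"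
    unfolding poly_coeff_root_of_unity_average[OF w ord deg k] by (simp add: av_mult av_power)
  also have "\<dots> \<le> (\<Sum>i<?m. av (poly p (w ^ i * s) * (w ^ i) ^ (?m - k)))"
    by (rule av_sum)
  also have "\<dots> \<le> (\<Sum>i<?m. B)"
    using bound by (intro sum_mono) (simp add: av_mult av_power av_w)
  finally have "(1/2) ^ e * (av (coeff p k) * av s ^ k) \<le> real ?m * B" by simp
  then show ?thesis by (simp add: field_simps power_mult_distrib)
qed

lemma poly_le_circle_bound:
  fixes p :: "'k poly"
  assumes alg: "alg_closed TYPE('k)" and q: "prime q" and q_half: "av (of_nat q) \<ge> 1/2"
    and deg: "degree p < q ^ e" and bound: "\<And>x. av x = av s \<Longrightarrow> av (poly p x) \<le> B"
    and t: "av t \<le> av s"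
  shows "av (poly p t) \<le> real (degree p + 1) * (2 * real q) ^ e * B"
proof -
  have "av (poly p t) \<le> (\<Sum>k\<le>degree p. av (coeff p k * t ^ k))"
    unfolding poly_altdef by (rule av_sum)
  also have "\<dots> \<le> (\<Sum>k\<le>degree p. av (coeff p k) * av s ^ k)"
    using t by (intro sum_mono) (simp add: av_mult av_power mult_left_mono power_mono)
  also have "\<dots> \<le> (\<Sum>k\<le>degree p. (2 * real q) ^ e * B)"
    using coeff_le_circle_bound[OF alg q q_half deg bound] by (intro sum_mono)
  finally show ?thesis by simp
qed

lemma poly_power_le_circle_bound:
  fixes p :: "'k poly"
  assumes alg: "alg_closed TYPE('k)" and q: "prime q" and q_half: "av (of_nat q) \<ge> 1/2"
    and bound: "\<And>x. av x = av s \<Longrightarrow> av (poly p x) \<le> B" and t: "av t \<le> av s"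
  shows "av (poly p t) ^ (q ^ j)
    \<le> (real (degree p + 1) * (2 * real q) ^ (degree p + 1)) * real (q ^ j) ^ 3 * B ^ (q ^ j)"
proof -
  let ?D = "degree p" and ?N = "q ^ j" and ?e = "j + degree p + 1"
  have q2: "q \<ge> 2" using prime_ge_2_nat[OF q] .
  have B: "B \<ge> 0" using bound[of s] av_nonneg[of "poly p s"] by linarith
  have N: "?N \<ge> 1" using q2 by simp
  have "?D < 2 ^ ?D" by (rule less_exp)
  also have "\<dots> \<le> q ^ ?D" using q2 by (intro power_mono) auto
  also have "\<dots> \<le> q ^ (?D + 1)" using q2 by (intro power_increasing) auto
  finally have "?D * ?N < q ^ (?D + 1) * ?N" using q2 by simp
  also have "\<dots> = q ^ ?e" by (simp add: power_add mult.commute)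
  finally have deg_N: "degree (p ^ ?N) < q ^ ?e" using degree_power_le[of p ?N] by linarith
  have bound_N: "av (poly (p ^ ?N) x) \<le> B ^ ?N" if "av x = av s" for x
    using bound[OF that] by (simp add: av_power power_mono)
  have "av (poly p t) ^ ?N \<le> real (degree (p ^ ?N) + 1) * (2 * real q) ^ ?e * B ^ ?N"
    using poly_le_circle_bound[OF alg q q_half deg_N bound_N t] by (simp add: av_power)
  also have "\<dots> \<le> (real (?D + 1) * real ?N) * ((2 * real q) ^ (?D + 1) * real ?N ^ 2) * B ^ ?N"
  proof -
    have "degree (p ^ ?N) + 1 \<le> (?D + 1) * ?N" using degree_power_le[of p ?N] N by simp
    then have "real (degree (p ^ ?N) + 1) \<le> real (?D + 1) * real ?N"
      by (metis of_nat_le_iff of_nat_mult)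
    moreover have "(2 * real q) ^ j \<le> (real q * real q) ^ j"
      using q2 by (intro power_mono mult_right_mono) auto
    then have "(2 * real q) ^ j \<le> real ?N ^ 2"
      by (simp add: power_mult_distrib power2_eq_square)
    moreover have "(2 * real q) ^ ?e = (2 * real q) ^ (?D + 1) * (2 * real q) ^ j"
      by (simp add: power_add)
    ultimately show ?thesis using B by (simp only:) (intro mult_right_mono mult_mono; simp)
  qed
  finally show ?thesis by (simp add: algebra_simps power3_eq_cube power2_eq_square)
qed

theorem poly_max_modulus:
  fixes p :: "'k poly"
  assumes alg: "alg_closed TYPE('k)"
    and bound: "\<And>x. av x = av s \<Longrightarrow> av (poly p x) \<le> B" and t: "av t \<le> av s"
  shows "av (poly p t) \<le> B"
proof -
  obtain q where q: "prime q" and q_half: "av (of_nat q) \<ge> 1/2"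
    using exists_prime_av_ge_half by blast
  have "B \<ge> 0" using bound[of s] av_nonneg[of "poly p s"] by linarith
  then show ?thesis
    using le_of_power_bound[OF prime_ge_2_nat[OF q]] poly_power_le_circle_bound[OF alg q q_half bound t]
    by blast
qed

lemma av_sums_terms_bounded:
  assumes "av_sums av (\<lambda>n. c n * z ^ n) S"
  shows "\<exists>G. \<forall>n. av (c n) * av z ^ n \<le> G"
proof -
  let ?R = "\<lambda>n. av (S - (\<Sum>i<n. c i * z ^ i))"
  have R: "?R \<longlonglongrightarrow> 0" using assms unfolding av_sums_def by simp
  have term_le: "av (c n * z ^ n) \<le> ?R n + ?R (Suc n)" for n
    using av_diff_le[of "S - (\<Sum>i<n. c i * z ^ i)" "S - (\<Sum>i<Suc n. c i * z ^ i)"] by simp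
  have R2: "(\<lambda>n. ?R n + ?R (Suc n)) \<longlonglongrightarrow> 0"
    using tendsto_add[OF R LIMSEQ_Suc[OF R]] by simp
  have "(\<lambda>n. av (c n * z ^ n)) \<longlonglongrightarrow> 0"
  proof (rule tendsto_sandwich[OF _ _ tendsto_const R2])
    show "\<forall>\<^sub>F n in sequentially. av (c n * z ^ n) \<le> ?R n + ?R (Suc n)"
      using term_le by (intro always_eventually) blast
  qed simp
  then have "Bseq (\<lambda>n. av (c n * z ^ n))" by (intro convergent_imp_Bseq convergentI)
  then obtain G where "\<And>n. norm (av (c n * z ^ n)) \<le> G" unfolding Bseq_def by blast
  then show ?thesis by (auto simp: av_mult av_power)
qed

lemma sum_power_atLeastLessThan_le:
  fixes \<theta> :: real
  assumes "0 \<le> \<theta>" "\<theta> < 1"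
  shows "(\<Sum>n\<in>{M..<M'}. \<theta> ^ n) \<le> \<theta> ^ M / (1 - \<theta>)"
proof (cases "M \<le> M'")
  case True
  have "(\<Sum>n\<in>{M..<M'}. \<theta> ^ n) = (\<Sum>i<M' - M. \<theta> ^ (M + i))"
    using True by (intro sum.reindex_bij_witness[of _ "\<lambda>i. M + i" "\<lambda>n. n - M"]) auto
  also have "\<dots> = \<theta> ^ M * ((1 - \<theta> ^ (M' - M)) / (1 - \<theta>))"
    using assms by (simp add: power_add sum_distrib_left[symmetric] sum_gp_strict)
  also have "\<dots> \<le> \<theta> ^ M * (1 / (1 - \<theta>))"
    using assms by (intro mult_left_mono divide_right_mono) auto
  finally show ?thesis by simp
next
  case False
  then show ?thesis using assms by simp
qed

lemma av_sums_tail_le: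
  assumes sums: "av_sums av f S" and f: "\<And>n. av (f n) \<le> G * \<theta> ^ n"
    and \<theta>: "0 \<le> \<theta>" "\<theta> < 1"
  shows "av (S - (\<Sum>i<M. f i)) \<le> G * \<theta> ^ M / (1 - \<theta>)"
proof (rule field_le_epsilon)
  fix e :: real
  assume "e > 0"
  with sums have "\<forall>\<^sub>F n in sequentially. av (S - (\<Sum>i<n. f i)) < e"
    unfolding av_sums_def by (intro order_tendstoD(2)) auto
  then obtain M1 where M1: "\<And>n. n \<ge> M1 \<Longrightarrow> av (S - (\<Sum>i<n. f i)) < e"
    unfolding eventually_sequentially by blast
  define M' where "M' = max M M1"
  have G: "G \<ge> 0" using order_trans[OF av_nonneg f[of 0]] by simp
  have "(\<Sum>i<M'. f i) = (\<Sum>i<M. f i) + (\<Sum>n\<in>{M..<M'}. f n)"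
    unfolding M'_def lessThan_atLeast0 by (rule sum.atLeastLessThan_concat[symmetric]) auto
  then have "S - (\<Sum>i<M. f i) = (S - (\<Sum>i<M'. f i)) + (\<Sum>n\<in>{M..<M'}. f n)"
    by simp
  then have "av (S - (\<Sum>i<M. f i)) \<le> av (S - (\<Sum>i<M'. f i)) + av (\<Sum>n\<in>{M..<M'}. f n)"
    by (simp only: av_triangle)
  also have "av (\<Sum>n\<in>{M..<M'}. f n) \<le> (\<Sum>n\<in>{M..<M'}. G * \<theta> ^ n)"
    using av_sum sum_mono[OF f] by (rule order_trans)
  also have "\<dots> \<le> G * (\<theta> ^ M / (1 - \<theta>))"
    unfolding sum_distrib_left[symmetric]
    using sum_power_atLeastLessThan_le[OF \<theta>] G by (rule mult_left_mono)
  finally show "av (S - (\<Sum>i<M. f i)) \<le> G * \<theta> ^ M / (1 - \<theta>) + e"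
    using M1[of M'] unfolding M'_def by simp
qed

text \<open>The power series of f converges geometrically on the closed disc of radius av s,
  with ratio the square root of av s.\<close>

lemma analytic_D_uniform_poly_approx:
  assumes alg: "alg_closed TYPE('k)" and f: "analytic_D av f" and s: "av s < 1" and e: "e > 0"
  shows "\<exists>p. \<forall>x. av x \<le> av s \<longrightarrow> av (f x - poly p x) \<le> e"
proof -
  obtain c where c: "\<And>x. av x < 1 \<Longrightarrow> av_sums av (\<lambda>n. c n * x ^ n) (f x)"
    using f unfolding analytic_D_def by blast
  obtain s' where s': "s' ^ 2 = s" using alg_closed_sqrt[OF alg] by blast
  define \<theta> where "\<theta> = av s'"
  have \<theta>: "0 \<le> \<theta>" "\<theta> < 1" and s_eq: "av s = \<theta> * \<theta>"
    using av_sqrt[OF s'] s unfolding \<theta>_def by auto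
  obtain G where G: "\<And>n. av (c n) * \<theta> ^ n \<le> G"
    using av_sums_terms_bounded[OF c[of s']] \<theta> unfolding \<theta>_def by blast
  have tail: "av (f x - (\<Sum>i<M. c i * x ^ i)) \<le> G * \<theta> ^ M / (1 - \<theta>)"
    if x: "av x \<le> av s" for x M
  proof (rule av_sums_tail_le[OF c _ \<theta>])
    show "av x < 1" using x s by simp
  next
    fix n
    have "av (c n * x ^ n) \<le> av (c n) * (\<theta> * \<theta>) ^ n"
      using x s_eq by (simp add: av_mult av_power mult_left_mono power_mono)
    also have "\<dots> = (av (c n) * \<theta> ^ n) * \<theta> ^ n" by (simp add: power_mult_distrib)
    also have "\<dots> \<le> G * \<theta> ^ n" using G[of n] \<theta> by (intro mult_right_mono) auto
    finally show "av (c n * x ^ n) \<le> G * \<theta> ^ n" .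
  qed
  have "(\<lambda>M. G * \<theta> ^ M / (1 - \<theta>)) \<longlonglongrightarrow> G * 0 / (1 - \<theta>)"
    using \<theta> by (intro tendsto_intros) auto
  then obtain M where M: "G * \<theta> ^ M / (1 - \<theta>) < e"
    using e order_tendstoD(2) eventually_sequentially by force
  have "poly (\<Sum>i<M. monom (c i) i) x = (\<Sum>i<M. c i * x ^ i)" for x
    by (simp add: poly_sum poly_monom)
  then have "av (f x - poly (\<Sum>i<M. monom (c i) i) x) \<le> e" if "av x \<le> av s" for x
    using tail[OF that, of M] M by simp
  then show ?thesis by blast
qed

theorem analytic_D_max_modulus:
  assumes alg: "alg_closed TYPE('k)" and f: "analytic_D av f"
    and bound: "\<And>x. av x = av s \<Longrightarrow> av (f x) \<le> B" and s: "av s < 1" and t: "av t \<le> av s"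
  shows "av (f t) \<le> B"
proof (rule field_le_epsilon)
  fix e :: real
  assume "e > 0"
  then obtain p where p: "\<And>x. av x \<le> av s \<Longrightarrow> av (f x - poly p x) \<le> e / 2"
    using analytic_D_uniform_poly_approx[OF alg f s, of "e / 2"] by auto
  have "av (poly p x) \<le> B + e / 2" if "av x = av s" for x
    using av_diff_le[of "f x" "f x - poly p x"] bound[OF that] p[of x] that by simp
  then have "av (poly p t) \<le> B + e / 2" using poly_max_modulus[OF alg _ t] by blast
  then show "av (f t) \<le> B + e"
    using av_triangle[of "poly p t" "f t - poly p t"] p[OF t] by simp
qed

lemma analytic_D_bound_extends_to_0:
  assumes alg: "alg_closed TYPE('k)" and f: "analytic_D av f"
    and \<rho>: "0 < \<rho>" "\<rho> \<le> 1" and B: "1 \<le> B"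
    and bound: "\<And>t. t \<noteq> 0 \<Longrightarrow> av t < \<rho> \<Longrightarrow> av (f t) \<le> B" and t: "av t < \<rho>"
  shows "av (f t) \<le> B"
proof (cases "t = 0")
  case False
  then show ?thesis using bound t by blast
next
  case True
  show ?thesis
  proof (cases "\<exists>x. 0 < av x \<and> av x < 1")
    case True
    then obtain x where x: "0 < av x" "av x < 1" by blast
    then have "(\<lambda>k. av x ^ k) \<longlonglongrightarrow> 0" by (intro LIMSEQ_power_zero) auto
    then obtain k where k: "av x ^ k < \<rho>"
      using \<rho> order_tendstoD(2) eventually_sequentially by force
    define s where "s = x ^ k"
    have s: "s \<noteq> 0" "av s < \<rho>" using x k by (simp_all add: s_def av_power av_pos_iff)
    have "av (f y) \<le> B" if "av y = av s" for y
      using bound[of y] that s by (metis av_eq_0_iff)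
    then show ?thesis
      using analytic_D_max_modulus[OF alg f, of s B t] s \<rho> \<open>t = 0\<close> by simp
  next
    case False
    have "\<not> av (f t) > 1"
    proof
      assume "av (f t) > 1"
      then have "0 < av (inverse (f t))" "av (inverse (f t)) < 1" by (simp_all add: av_inverse inverse_less_1_iff)
      then show False using False by blast
    qed
    then show ?thesis using B by simp
  qed
qed

lemma poly_bdd_above_on_disc: "bdd_above ((\<lambda>t. av (poly p t)) ` {t. av t < 1})"
proof (rule bdd_aboveI2)
  fix t
  assume "t \<in> {t. av t < 1}"
  then have "av t ^ k \<le> 1" for k by (simp add: power_le_one)
  then have "av (coeff p k * t ^ k) \<le> av (coeff p k)" for k
    by (simp add: av_mult av_power mult_left_le)
  then show "av (poly p t) \<le> (\<Sum>k\<le>degree p. av (coeff p k))"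
    unfolding poly_altdef by (intro order_trans[OF av_sum] sum_mono)
qed

lemma av_poly_le_Max_SUP_disc:
  fixes Q :: "nat \<Rightarrow> 'k poly"
  assumes "finite J" "j \<in> J" "av t < 1"
  shows "av (poly (Q j) t) + 2 \<le> Max ((\<lambda>j. (SUP t\<in>{t. av t < 1}. av (poly (Q j) t)) + 2) ` J)"
proof -
  have "av (poly (Q j) t) \<le> (SUP t\<in>{t. av t < 1}. av (poly (Q j) t))"
    using assms(3) poly_bdd_above_on_disc by (intro cSUP_upper) auto
  also have "\<dots> + 2 \<le> Max ((\<lambda>j. (SUP t\<in>{t. av t < 1}. av (poly (Q j) t)) + 2) ` J)"
    using assms(1,2) by (intro Max_ge) auto
  finally show ?thesis by simp
qed

text \<open>At t the factor av t ^ l beats the growth of v on the circle of radius sqrt (av t).\<close>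

lemma av_le_of_contact:
  fixes h :: "'k \<Rightarrow> 'k" and q :: "'k poly" and D E K \<rho> :: real
  assumes alg: "alg_closed TYPE('k)" and h: "analytic_D av h"
    and contact: "\<And>t. 0 < av t \<Longrightarrow> av t < 1 \<Longrightarrow> v t - poly q t = t ^ l * h t"
    and q_bound: "\<And>t. av t < 1 \<Longrightarrow> av (poly q t) \<le> E"
    and growth: "\<And>w. 0 < av w \<Longrightarrow> av w < \<rho> \<Longrightarrow> av (v w) \<le> K * av w powr (- D)"
    and D: "D \<le> real l" and \<rho>: "0 < \<rho>" "\<rho> \<le> 1" and K: "0 \<le> K"
    and t: "0 < av t" "av t < \<rho> ^ 2"
  shows "av (v t) \<le> 2 * E + K"
proof -
  have E: "E \<ge> 0" using order_trans[OF av_nonneg q_bound[of 0]] by simp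
  obtain s where s: "s ^ 2 = t" using alg_closed_sqrt[OF alg] by blast
  define \<sigma> where "\<sigma> = av s"
  have \<sigma>_sqrt: "\<sigma> = sqrt (av t)" unfolding \<sigma>_def using av_sqrt[OF s] .
  have \<sigma>: "0 < \<sigma>" "\<sigma> < \<rho>" "\<sigma> < 1"
    using t \<rho> real_sqrt_less_mono[of "av t" "\<rho> ^ 2"] power_le_one[of \<rho> 2]
    unfolding \<sigma>_sqrt by auto
  have t_eq: "av t = \<sigma> ^ 2" using \<sigma>_sqrt t by simp
  have "av (h w) \<le> (K * \<sigma> powr (- D) + E) / \<sigma> ^ l" if w: "av w = \<sigma>" for w
  proof -
    have "\<sigma> ^ l * av (h w) = av (v w - poly q w)"
      using contact[of w] w \<sigma> by (simp add: av_mult av_power)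
    also have "\<dots> \<le> K * \<sigma> powr (- D) + E"
      using av_diff_le[of "v w" "poly q w"] growth[of w] q_bound[of w] w \<sigma> by simp
    finally show ?thesis using \<sigma> by (simp add: field_simps)
  qed
  moreover have "av t \<le> av s"
    using \<sigma> unfolding t_eq \<sigma>_def[symmetric] by (simp add: power2_eq_square mult_left_le_one_le)
  ultimately have h_t: "av (h t) \<le> (K * \<sigma> powr (- D) + E) / \<sigma> ^ l"
    using analytic_D_max_modulus[OF alg h] \<sigma> unfolding \<sigma>_def by blast
  have "\<sigma> ^ l * \<sigma> powr (- D) = \<sigma> powr (real l - D)"
    using \<sigma> by (simp add: powr_realpow[symmetric] powr_add[symmetric])
  also have "\<dots> \<le> 1" using \<sigma> D by (intro powr_le1) auto
  finally have decay: "\<sigma> ^ l * \<sigma> powr (- D) \<le> 1" .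
  have "v t = poly q t + t ^ l * h t"
    using contact[of t] \<sigma> t_eq t by (simp add: power_less_one_iff algebra_simps)
  then have "av (v t) \<le> E + (\<sigma> ^ 2) ^ l * av (h t)"
    using av_triangle[of "poly q t" "t ^ l * h t"] q_bound[of t] t_eq \<sigma>
    by (simp add: av_mult av_power power_less_one_iff)
  also have "\<dots> \<le> E + (\<sigma> ^ 2) ^ l * ((K * \<sigma> powr (- D) + E) / \<sigma> ^ l)"
    using h_t by (intro add_left_mono mult_left_mono) simp_all
  also have "\<dots> = E + K * (\<sigma> ^ l * \<sigma> powr (- D)) + E * \<sigma> ^ l"
    using \<sigma> by (simp add: field_simps power_mult[symmetric] mult_2_right power_add)
  also have "\<dots> \<le> E + K * 1 + E * 1"
    using decay K E \<sigma> by (intro add_mono mult_left_mono) (auto simp: power_le_one)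
  finally show ?thesis by simp
qed

lemma analytic_D_bound_of_contact:
  fixes h :: "'k \<Rightarrow> 'k" and q :: "'k poly" and D E K \<rho> :: real
  assumes alg: "alg_closed TYPE('k)" and v: "analytic_D av v" and h: "analytic_D av h"
    and contact: "\<And>t. 0 < av t \<Longrightarrow> av t < 1 \<Longrightarrow> v t - poly q t = t ^ l * h t"
    and q_bound: "\<And>t. av t < 1 \<Longrightarrow> av (poly q t) \<le> E"
    and growth: "\<And>w. 0 < av w \<Longrightarrow> av w < \<rho> \<Longrightarrow> av (v w) \<le> K * av w powr (- D)"
    and D: "D \<le> real l" and \<rho>: "0 < \<rho>" "\<rho> \<le> 1" and K: "1 \<le> K"
    and t: "av t < \<rho> ^ 2"
  shows "av (v t) \<le> 2 * E + K"
proof (rule analytic_D_bound_extends_to_0[OF alg v _ _ _ _ t])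
  show "0 < \<rho> ^ 2" "\<rho> ^ 2 \<le> 1" using \<rho> by (simp_all add: power_le_one)
  show "1 \<le> 2 * E + K" using order_trans[OF av_nonneg q_bound[of 0]] K by simp
  show "av (v t) \<le> 2 * E + K" if "t \<noteq> 0" "av t < \<rho> ^ 2" for t
    using av_le_of_contact[OF alg h contact q_bound growth D \<rho>] K that by (simp add: av_pos_iff)
qed

text \<open>The bound solves M (j + 1) = d * M j + ln (3 * A), with M 0 = ln (3 * A).\<close>

lemma iterate_log_bound:
  fixes P :: "'k \<Rightarrow> 'k \<Rightarrow> 'k" and u :: "nat \<Rightarrow> 'k \<Rightarrow> 'k" and d :: nat and C A r0 :: real
  assumes alg: "alg_closed TYPE('k)" and d: "d \<ge> 2"
    and C_bound: "\<And>t z. 0 < av t \<Longrightarrow> av t \<le> 1/2 \<Longrightarrow>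
        ln (max 1 (av (P t z))) / real d - ln (max 1 (av z)) \<le> C * ln (1 / av t)"
    and u_an: "\<And>m. analytic_D av (u m)"
    and u_Suc: "\<And>m t. 0 < av t \<Longrightarrow> av t < 1 \<Longrightarrow> u (Suc m) t = P t (u m t)"
    and contact: "\<And>n. \<exists>q h. analytic_D av h \<and> (\<forall>t. av t < 1 \<longrightarrow> av (poly q t) \<le> A - 2) \<and>
        (\<forall>t. 0 < av t \<and> av t < 1 \<longrightarrow> u n t - poly q t = t ^ l * h t)"
    and l: "C * real d \<le> real l" and A: "2 \<le> A" and r0: "0 < r0" "r0 \<le> 1/2"
    and base: "\<And>t. av t < r0 \<Longrightarrow> ln (max 1 (av (u n0 t))) \<le> ln (3 * A)"
  shows "av t < r0 ^ 2 ^ j \<Longrightarrow>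
    ln (max 1 (av (u (n0 + j) t))) \<le> ln (3 * A) * (real d ^ Suc j - 1) / (real d - 1)"
proof (induction j arbitrary: t)
  case 0
  then show ?case using base d by simp
next
  case (Suc j)
  define B where "B = ln (3 * A) * (real d ^ Suc j - 1) / (real d - 1)"
  define \<rho> where "\<rho> = r0 ^ 2 ^ j"
  have "1 \<le> real d ^ Suc j" using d by (intro one_le_power) simp
  then have B: "B \<ge> 0" unfolding B_def using A d by (intro divide_nonneg_pos mult_nonneg_nonneg) auto
  have \<rho>: "0 < \<rho>" "\<rho> \<le> 1/2"
    using r0 power_decreasing[of 1 "2 ^ j" r0] unfolding \<rho>_def by auto
  obtain q h where h: "analytic_D av h" and q: "\<And>t. av t < 1 \<Longrightarrow> av (poly q t) \<le> A - 2"
    and qh: "\<And>t. 0 < av t \<Longrightarrow> av t < 1 \<Longrightarrow> u (Suc (n0 + j)) t - poly q t = t ^ l * h t"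
    using contact[of "Suc (n0 + j)"] by blast
  have growth: "av (u (Suc (n0 + j)) w) \<le> exp (real d * B) * av w powr (- (C * real d))"
    if w: "0 < av w" "av w < \<rho>" for w
  proof (rule le_exp_powr_of_ln_max_growth)
    show "ln (max 1 (av (u (Suc (n0 + j)) w))) / real d - ln (max 1 (av (u (n0 + j) w)))
        \<le> C * ln (1 / av w)"
      using C_bound[of w "u (n0 + j) w"] u_Suc[of w "n0 + j"] w \<rho> by simp
    show "ln (max 1 (av (u (n0 + j) w))) \<le> B"
      using Suc.IH[of w] w unfolding B_def \<rho>_def by simp
  qed (use d w in simp_all)
  have t: "av t < \<rho> ^ 2"
    using Suc.prems unfolding \<rho>_def by (simp add: power_mult[symmetric] mult.commute)
  have X: "1 \<le> exp (real d * B)" using B by simp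
  have "av (u (n0 + Suc j) t) \<le> 2 * (A - 2) + exp (real d * B)"
    using analytic_D_bound_of_contact[OF alg u_an h qh q growth l _ _ _ t] \<rho> X d by simp
  also have "\<dots> \<le> 3 * A * exp (real d * B)"
    using mult_left_mono[OF X, of "3 * A - 1"] A by (simp add: algebra_simps)
  finally have "max 1 (av (u (n0 + Suc j) t)) \<le> 3 * A * exp (real d * B)"
    using mult_mono[OF _ X, of 1 "3 * A"] A by simp
  then have "ln (max 1 (av (u (n0 + Suc j) t))) \<le> ln (3 * A * exp (real d * B))"
    by simp
  also have "\<dots> = ln (3 * A) + real d * B"
    using A by (simp add: ln_mult)
  also have "\<dots> = ln (3 * A) * (real d ^ Suc (Suc j) - 1) / (real d - 1)"
    unfolding B_def using d by (simp add: field_simps)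
  finally show ?case .
qed

end

theorem lemma4p1:
  fixes av :: "'k::field \<Rightarrow> real"
    and d :: nat and alpha :: "nat \<Rightarrow> 'k \<Rightarrow> 'k" and P :: "'k \<Rightarrow> 'k \<Rightarrow> 'k"
    and C :: real and a :: "'k \<Rightarrow> 'k" and u :: "nat \<Rightarrow> 'k \<Rightarrow> 'k"
    and g :: "nat \<Rightarrow> 'k \<Rightarrow> real"
    and l :: nat and N :: nat and Q :: "nat \<Rightarrow> 'k poly" and A :: real
    and n0 :: nat and r0 :: real and r :: "nat \<Rightarrow> real" and C1 :: real
  assumes av: "is_abs_val av" and compl: "av_complete av" and alg: "alg_closed TYPE('k)"
    and d: "d \<ge> 2"
    and P_def: "\<And>t z. P t z = (\<Sum>i\<le>d. alpha i t * z ^ (d - i))"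
    and alpha_mero: "\<And>i. i \<le> d \<Longrightarrow> mero_D av (alpha i)"
    and alpha0: "\<And>t. 0 < av t \<Longrightarrow> av t < 1 \<Longrightarrow> alpha 0 t \<noteq> 0"
    and C_pos: "C > 0"
    and C_bound: "\<And>t z. 0 < av t \<Longrightarrow> av t \<le> 1/2 \<Longrightarrow>
        \<bar>ln (max 1 (av (P t z))) / real d - ln (max 1 (av z))\<bar> \<le> C * ln (1 / av t)"
    and a_mero: "mero_D av a"
    and u_an: "\<And>m. analytic_D av (u m)"
    and u_def: "\<And>m t. 0 < av t \<Longrightarrow> av t < 1 \<Longrightarrow> u m t = (P t ^^ m) (a t)"
    and g_def: "\<And>m t. g m t = ln (max 1 (av (u m t))) / real d ^ m"
    and l: "real l \<ge> C * real d"
    and Q: "\<And>n. \<exists>i\<in>{1..N}. \<exists>h. analytic_D av h \<and>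
              (\<forall>t. 0 < av t \<and> av t < 1 \<longrightarrow> u n t - poly (Q i) t = t ^ l * h t)"
    and A_def: "A = Max ((\<lambda>j. (SUP t\<in>{t. av t < 1}. av (poly (Q j) t)) + 2) ` {1..N})"
    and n0: "n0 \<ge> 1"
    and r0: "0 < r0" "r0 \<le> 1/2"
    and u_n0: "\<And>t. av t < r0 \<Longrightarrow> av (u n0 t) \<le> ln A"
    and r_def: "\<And>j. r j = r0 ^ (2 ^ j)"
    and C1_def: "C1 = real d / (real d - 1) * ln (3 * A)"
  shows "\<forall>j. \<forall>t. av t < r j \<longrightarrow> g (n0 + j) t \<le> C1 / real d ^ n0"
proof -
  interpret abs_value av by (rule abs_value.intro) (rule av)
  have QA: "av (poly (Q i) t) \<le> A - 2" if "i \<in> {1..N}" "av t < 1" for i t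
    using av_poly_le_Max_SUP_disc[where Q = Q, OF finite_atLeastAtMost that] unfolding A_def by simp
  have "1 \<le> N" using Q[of 0] by auto
  then have A: "2 \<le> A" using order_trans[OF av_nonneg QA[of 1 0]] by simp
  have log_bound: "ln (max 1 (av (u (n0 + j) t))) \<le> ln (3 * A) * (real d ^ Suc j - 1) / (real d - 1)"
    if "av t < r j" for j t
  proof (rule iterate_log_bound[OF alg d _ u_an _ _ l A r0 _ that[unfolded r_def]])
    show "ln (max 1 (av (P t z))) / real d - ln (max 1 (av z)) \<le> C * ln (1 / av t)"
      if "0 < av t" "av t \<le> 1/2" for t z using C_bound[OF that, of z] by linarith
    show "u (Suc m) t = P t (u m t)" if "0 < av t" "av t < 1" for m t
      using u_def[OF that] by simp
    show "\<exists>q h. analytic_D av h \<and> (\<forall>t. av t < 1 \<longrightarrow> av (poly q t) \<le> A - 2) \<and>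
        (\<forall>t. 0 < av t \<and> av t < 1 \<longrightarrow> u n t - poly q t = t ^ l * h t)" for n
      using Q[of n] QA by blast
    show "ln (max 1 (av (u n0 t))) \<le> ln (3 * A)" if "av t < r0" for t
      using u_n0[OF that] A ln_le_minus_one[of A] by simp
  qed
  show ?thesis
  proof (intro allI impI)
    fix j t
    assume "av t < r j"
    have "g (n0 + j) t \<le> ln (3 * A) * (real d ^ Suc j - 1) / (real d - 1) / real d ^ (n0 + j)"
      unfolding g_def using log_bound[OF \<open>av t < r j\<close>] d by (intro divide_right_mono) auto
    also have "\<dots> \<le> ln (3 * A) * real d ^ Suc j / (real d - 1) / real d ^ (n0 + j)"
      using A d by (intro divide_right_mono mult_left_mono) auto
    also have "\<dots> = C1 / real d ^ n0"
      unfolding C1_def using d by (simp add: field_simps power_add)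
    finally show "g (n0 + j) t \<le> C1 / real d ^ n0" .
  qed
qed

end
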